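(* Let $\epsilon\in\{-1,0,1\}$, $f\in L^2(\Omega)$, and let $\mathbf u_h=(u_h,\hat u_h)\in\mathbf V_h$ be a solution of the H-IP problem. Then: (a) on every interior face $F=\partial E_1\cap\partial E_2$, $$\hat u_h=\{u_h\}_{\omega^\tau}-\varrho_1[\kappa\nabla_hu_h],$$ and $\hat u_h=0$ on boundary faces; (b) the normal numerical flux is single-valued: $\hat\sigma(\mathbf u_h)|_{E_1,F}\cdot n_1+\hat\sigma(\mathbf u_h)|_{E_2,F}\cdot n_2=0$ on every interior face; (c) on every face $F\in\mathcal F_h$ and every element $E$ with $F\in\mathcal F_E$, $$\hat\sigma(\mathbf u_h)|_{E,F}\cdot n_{E,F}=\big(-\{\kappa\nabla_hu_h\}^*_{\omega^\tau}+\varrho_0[u_h]\big)\cdot n_{E,F}.$$ In particular the normal numerical flux depends only on $u_h$.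
   Context: Setting. Let $\Omega\subset\mathbb R^d$, $d\in\{2,3\}$, be a bounded polyhedral Lipschitz domain. Let $\kappa:\Omega\to\mathbb R^{d\times d}$ be symmetric with $\kappa_{\min}|\xi|^2\le\xi^\top\kappa(x)\xi\le\kappa_{\max}|\xi|^2$ for all $\xi\in\mathbb R^d$ and a.e. $x$, where $0<\kappa_{\min}\le\kappa_{\max}<\infty$. Let $\mathcal T_h$ be a conforming affine simplicial mesh of $\Omega$ from a shape-regular family, with $h_E=\operatorname{diam}E$, $h=\max_Eh_E\le1$, and assume $\kappa$ is constant on each element, $\kappa_E:=\kappa|_E$. $\mathcal F_h=\mathcal F_h^i\cup\mathcal F_h^b$ is the set of faces (edges if $d=2$), split into interior and boundary faces; $\mathcal F_E$ is the set of faces of $E$, $n_{E,F}$ the unit outward normal to $F\in\mathcal F_E$, and $\eta_0:=\max_E\#\mathcal F_E$. For an interior face $F=\partial E_1\cap\partial E_2$, a subscript $i\in\{1,2\}$ denotes the trace from $E_i$ and $n_i:=n_{E_i,F}$. $\nabla_h$ is the elementwise gradient; $(\cdot,\cdot)_{\mathcal T_h}:=\sum_E(\cdot,\cdot)_{L^2(E)}$, $\langle\cdot,\cdot\rangle_{\partial\mathcal T_h}:=\sum_E\sum_{F\in\mathcal F_E}\langle\cdot,\cdot\rangle_{L^2(F)}$ (traces from $E$), $\langle\cdot,\cdot\rangle_{\mathcal F}:=\sum_{F\in\mathcal F}\langle\cdot,\cdot\rangle_{L^2(F)}$ for a set $\mathcal F$ of faces. Fix $k\ge1$: $V_h:=\{v\in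 L^2(\Omega):v|_E\in\mathbb P_k(E)\ \forall E\}$, $\hat V_h:=\{\hat v\in L^2(\bigcup_{F\in\mathcal F_h}F):\hat v|_F\in\mathbb P_k(F)\ \forall F,\ \hat v|_F=0\ \forall F\in\mathcal F_h^b\}$, $\mathbf V_h:=V_h\times\hat V_h$ ($\mathbb P_k$ = polynomials of total degree $\le k$). Trace operators. For an interior face and a pair of weights $(\omega_1,\omega_2)$ with $\omega_1+\omega_2=1$ (boundary faces: $(1,0)$): $[\varphi]:=\varphi_1n_1+\varphi_2n_2$, $\{\varphi\}_\omega:=\omega_1\varphi_1+\omega_2\varphi_2$, $\{\varphi\}^*_\omega:=\omega_2\varphi_1+\omega_1\varphi_2$; on a boundary face $F\subset\partial E$: $[\varphi]:=\varphi|_En_{E,F}$, $\{\varphi\}_\omega=\{\varphi\}^*_\omega:=\varphi|_E$. Means of vector fields are componentwise; for a vector field $\mathbf b$, $[\mathbf b]:=\mathbf b_1\cdot n_1+\mathbf b_2\cdot n_2$ (scalar) on interior faces. HDG jump: $[\![(\varphi,\hat\varphi)]\!]|_{E,F}:=(\varphi|_E-\hat\varphi)n_{E,F}$ for $F\in\mathcal F_E$. Penalty and coefficients. Let $C_T>0$ be such that $\|w\|_{L^2(F)}^2\le C_T^2h_E^{-1}\|w\|_{L^2(E)}^2$ for all $E$, $F\in\mathcal F_E$, $w\in\mathbb P_k(E)$. Fix $\alpha_0>0$ and set $\tau|_{E,F}:=\alpha_0C_T^2\kappa_{E,F}h_E^{-1}$ with $\kappa_{E,F}:=n_{E,F}^\top\kappa_En_{E,F}$.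 On an interior face with $\tau_i:=\tau|_{E_i,F}$: $\omega^\tau_i:=\tau_i/(\tau_1+\tau_2)$, $\varrho_0:=\tau_1\tau_2/(\tau_1+\tau_2)$, $\varrho_1:=1/(\tau_1+\tau_2)$; on a boundary face $F\subset\partial E$: $\omega^\tau:=(1,0)$, $\varrho_0:=\tau|_{E,F}$. H-IP method. For $\epsilon\in\{-1,0,1\}$, $\sigma(v):=-\kappa\nabla_hv$, and for $\mathbf u=(u,\hat u)\in\mathbf V_h$, $\hat\sigma(\mathbf u):=\sigma(u)+\tau[\![\mathbf u]\!]$ on $\partial\mathcal T_h$ (double-valued). $\mathbf a_h^{(\epsilon)}(\mathbf u,\mathbf v):=(\kappa\nabla_hu,\nabla_hv)_{\mathcal T_h}+\langle\hat\sigma(\mathbf u),[\![\mathbf v]\!]\rangle_{\partial\mathcal T_h}+\epsilon\langle\sigma(v),[\![\mathbf u]\!]\rangle_{\partial\mathcal T_h}$ for $\mathbf u=(u,\hat u),\mathbf v=(v,\hat v)\in\mathbf V_h$. The H-IP problem: find $\mathbf u_h\in\mathbf V_h$ with $\mathbf a_h^{(\epsilon)}(\mathbf u_h,\mathbf v_h)=(f,v_h)_{\mathcal T_h}$ for all $\mathbf v_h=(v_h,\hat v_h)\in\mathbf V_h$. *)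

theory Defs
  imports "HOL-Analysis.Analysis"
begin

(* Points are in R^d, modelled as real^'n with d = CARD('n).
   A simplex element / face is represented by its (finite) vertex set;
   the geometric object is its convex hull. *)

definition lipschitz_domain :: "(real^'n) set \<Rightarrow> bool" where
  "lipschitz_domain \<Omega> \<longleftrightarrow> open \<Omega> \<and> bounded \<Omega> \<and> connected \<Omega> \<and>
     (\<forall>x\<in>frontier \<Omega>. \<exists>r>0. \<exists>a::real^'n. norm a = 1 \<and>
        (\<exists>g L. L-lipschitz_on {z. z \<bullet> a = 0} g \<and>
           \<Omega> \<inter> ball x r = {y \<in> ball x r. g (y - (y \<bullet> a) *\<^sub>R a) < y \<bullet> a}))"

definition is_face :: "(real^'n) set \<Rightarrow> (real^'n) set \<Rightarrow> bool" where
  "is_face V F \<longleftrightarrow> F \<subseteq> V \<and> card F = CARD('n)"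

definition faces_of :: "(real^'n) set set \<Rightarrow> (real^'n) set set" where
  "faces_of T = {F. \<exists>V\<in>T. is_face V F}"

definition interior_face :: "(real^'n) set set \<Rightarrow> (real^'n) set \<Rightarrow> bool" where
  "interior_face T F \<longleftrightarrow> F \<in> faces_of T \<and>
     (\<exists>V1\<in>T. \<exists>V2\<in>T. V1 \<noteq> V2 \<and> F \<subseteq> V1 \<and> F \<subseteq> V2)"

definition boundary_face :: "(real^'n) set set \<Rightarrow> (real^'n) set \<Rightarrow> bool" where
  "boundary_face T F \<longleftrightarrow> F \<in> faces_of T \<and> \<not> interior_face T F"

definition conforming_simplicial_mesh :: "(real^'n) set \<Rightarrow> (real^'n) set set \<Rightarrow> bool" where
  "conforming_simplicial_mesh \<Omega> T \<longleftrightarrow> finite T \<and> T \<noteq> {} \<and>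
     (\<forall>V\<in>T. finite V \<and> card V = CARD('n) + 1 \<and> \<not> affine_dependent V) \<and>
     closure \<Omega> = (\<Union>V\<in>T. convex hull V) \<and>
     (\<forall>V1\<in>T. \<forall>V2\<in>T. V1 \<noteq> V2 \<longrightarrow>
        interior (convex hull V1) \<inter> interior (convex hull V2) = {} \<and>
        (convex hull V1) \<inter> (convex hull V2) = convex hull (V1 \<inter> V2))"

definition hE :: "(real^'n) set \<Rightarrow> real" where
  "hE V = diameter (convex hull V)"

definition onormal :: "(real^'n) set \<Rightarrow> (real^'n) set \<Rightarrow> real^'n" where
  "onormal V F = (THE n. norm n = 1 \<and> (\<forall>x\<in>F. \<forall>y\<in>F. n \<bullet> (x - y) = 0) \<and>
                        (\<forall>x\<in>F. \<forall>q\<in>V - F. n \<bullet> (q - x) < 0))"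

(* surface (Hausdorff (d-1)-dimensional) integral over a flat face conv F,
   realised as the d-dimensional Lebesgue integral over the right prism
   conv F + [0,1] n_F of height 1 of the extension of g that is constant
   in the normal direction (Fubini). *)
definition fnormal :: "(real^'n) set \<Rightarrow> real^'n" where
  "fnormal F = (SOME n. norm n = 1 \<and> (\<forall>x\<in>F. \<forall>y\<in>F. n \<bullet> (x - y) = 0))"

definition fproj :: "(real^'n) set \<Rightarrow> real^'n \<Rightarrow> real^'n" where
  "fproj F y = y - ((y - (SOME x. x \<in> F)) \<bullet> fnormal F) *\<^sub>R fnormal F"

definition prism :: "(real^'n) set \<Rightarrow> (real^'n) set" where
  "prism F = {x + t *\<^sub>R fnormal F | x t. x \<in> convex hull F \<and> 0 \<le> t \<and> t \<le> 1}"

definition face_integral :: "(real^'n) set \<Rightarrow> (real^'n \<Rightarrow> real) \<Rightarrow> real" where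
  "face_integral F g = integral (prism F) (\<lambda>y. g (fproj F y))"

definition Pk :: "nat \<Rightarrow> (real^'n \<Rightarrow> real) set" where
  "Pk k = {p. \<exists>c :: ('n \<Rightarrow> nat) \<Rightarrow> real.
      p = (\<lambda>x. \<Sum>\<alpha>\<in>{\<alpha>. (\<Sum>i\<in>UNIV. \<alpha> i) \<le> k}. c \<alpha> * (\<Prod>i\<in>UNIV. (x $ i) ^ (\<alpha> i)))}"

definition grad :: "(real^'n \<Rightarrow> real) \<Rightarrow> real^'n \<Rightarrow> real^'n" where
  "grad p x = (THE D. GDERIV p x :> D)"

(* u_h \<in> V_h: elementwise polynomial, u V = polynomial on element conv V *)
definition in_Vh :: "nat \<Rightarrow> (real^'n) set set \<Rightarrow> ((real^'n) set \<Rightarrow> real^'n \<Rightarrow> real) \<Rightarrow> bool" where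
  "in_Vh k T u \<longleftrightarrow> (\<forall>V\<in>T. u V \<in> Pk k)"

definition in_Vhat :: "nat \<Rightarrow> (real^'n) set set \<Rightarrow> ((real^'n) set \<Rightarrow> real^'n \<Rightarrow> real) \<Rightarrow> bool" where
  "in_Vhat k T uh \<longleftrightarrow> (\<forall>F\<in>faces_of T. uh F \<in> Pk k) \<and>
     (\<forall>F. boundary_face T F \<longrightarrow> (\<forall>x\<in>convex hull F. uh F x = 0))"

definition kappaEF :: "((real^'n) set \<Rightarrow> real^'n^'n) \<Rightarrow> (real^'n) set \<Rightarrow> (real^'n) set \<Rightarrow> real" where
  "kappaEF kap V F = onormal V F \<bullet> (kap V *v onormal V F)"

definition tauEF :: "real \<Rightarrow> real \<Rightarrow> ((real^'n) set \<Rightarrow> real^'n^'n) \<Rightarrow> (real^'n) set \<Rightarrow> (real^'n) set \<Rightarrow> real" where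
  "tauEF alpha0 CT kap V F = alpha0 * CT\<^sup>2 * kappaEF kap V F / hE V"

definition sigma :: "((real^'n) set \<Rightarrow> real^'n^'n) \<Rightarrow> ((real^'n) set \<Rightarrow> real^'n \<Rightarrow> real)
     \<Rightarrow> (real^'n) set \<Rightarrow> real^'n \<Rightarrow> real^'n" where
  "sigma kap u V x = - (kap V *v grad (u V) x)"

definition hjump :: "((real^'n) set \<Rightarrow> real^'n \<Rightarrow> real) \<Rightarrow> ((real^'n) set \<Rightarrow> real^'n \<Rightarrow> real)
     \<Rightarrow> (real^'n) set \<Rightarrow> (real^'n) set \<Rightarrow> real^'n \<Rightarrow> real^'n" where
  "hjump u uh V F x = (u V x - uh F x) *\<^sub>R onormal V F"

definition hatsigma :: "real \<Rightarrow> real \<Rightarrow> ((real^'n) set \<Rightarrow> real^'n^'n)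
     \<Rightarrow> ((real^'n) set \<Rightarrow> real^'n \<Rightarrow> real) \<Rightarrow> ((real^'n) set \<Rightarrow> real^'n \<Rightarrow> real)
     \<Rightarrow> (real^'n) set \<Rightarrow> (real^'n) set \<Rightarrow> real^'n \<Rightarrow> real^'n" where
  "hatsigma alpha0 CT kap u uh V F x =
     sigma kap u V x + tauEF alpha0 CT kap V F *\<^sub>R hjump u uh V F x"

definition aH :: "real \<Rightarrow> real \<Rightarrow> real \<Rightarrow> (real^'n) set set \<Rightarrow> ((real^'n) set \<Rightarrow> real^'n^'n)
     \<Rightarrow> ((real^'n) set \<Rightarrow> real^'n \<Rightarrow> real) \<Rightarrow> ((real^'n) set \<Rightarrow> real^'n \<Rightarrow> real)
     \<Rightarrow> ((real^'n) set \<Rightarrow> real^'n \<Rightarrow> real) \<Rightarrow> ((real^'n) set \<Rightarrow> real^'n \<Rightarrow> real) \<Rightarrow> real" where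
  "aH eps alpha0 CT T kap u uh v vh =
     (\<Sum>V\<in>T. integral (convex hull V) (\<lambda>x. (kap V *v grad (u V) x) \<bullet> grad (v V) x))
   + (\<Sum>V\<in>T. \<Sum>F\<in>{F. is_face V F}.
        face_integral F (\<lambda>x. hatsigma alpha0 CT kap u uh V F x \<bullet> hjump v vh V F x))
   + eps * (\<Sum>V\<in>T. \<Sum>F\<in>{F. is_face V F}.
        face_integral F (\<lambda>x. sigma kap v V x \<bullet> hjump u uh V F x))"

definition HIP_solution :: "nat \<Rightarrow> real \<Rightarrow> real \<Rightarrow> real \<Rightarrow> (real^'n) set set \<Rightarrow> ((real^'n) set \<Rightarrow> real^'n^'n)
     \<Rightarrow> (real^'n \<Rightarrow> real) \<Rightarrow> ((real^'n) set \<Rightarrow> real^'n \<Rightarrow> real) \<Rightarrow> ((real^'n) set \<Rightarrow> real^'n \<Rightarrow> real) \<Rightarrow> bool" where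
  "HIP_solution k eps alpha0 CT T kap f u uh \<longleftrightarrow> in_Vh k T u \<and> in_Vhat k T uh \<and>
     (\<forall>v vh. in_Vh k T v \<and> in_Vhat k T vh \<longrightarrow>
        aH eps alpha0 CT T kap u uh v vh = (\<Sum>V\<in>T. (LINT x:convex hull V|lebesgue. f x * v V x)))"

end

theory Submission
  imports Defs
begin

(*
  Test the discrete equations with v = 0 and a face function hat-v supported on one interior
  face F.  The volume term, the epsilon-term and the load vanish, and what is left is
  - integral_F hat-v (sigma_1 . n_1 + sigma_2 . n_2) = 0, where sigma_i is the numerical flux
  seen from the element E_i.  The jump sigma_1 . n_1 + sigma_2 . n_2 is itself a polynomial of
  degree k on F, hence an admissible hat-v, so its L2(F)-norm vanishes: this is (b).
  As n_2 = -n_1 and sigma_i . n_i = -kappa_i grad u_i . n_i + tau_i (u_i - hat-u), (b) is a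
  linear equation for hat-u with coefficient tau_1 + tau_2 > 0; its solution is (a), and
  substituting (a) back gives (c).
*)

section \<open>Polynomials of bounded total degree\<close>

definition multi_monomial :: "('n::finite \<Rightarrow> nat) \<Rightarrow> real^'n \<Rightarrow> real" where
  "multi_monomial \<alpha> x = (\<Prod>i\<in>UNIV. (x $ i) ^ \<alpha> i)"

definition multi_indices_le :: "nat \<Rightarrow> ('n::finite \<Rightarrow> nat) set" where
  "multi_indices_le k = {\<alpha>. (\<Sum>i\<in>UNIV. \<alpha> i) \<le> k}"

lemma finite_multi_indices_le: "finite (multi_indices_le k :: ('n::finite \<Rightarrow> nat) set)"
proof (rule finite_subset)
  show "multi_indices_le k \<subseteq> PiE (UNIV::'n set) (\<lambda>_. {..k})"
    unfolding multi_indices_le_def PiE_def Pi_def extensional_def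
    by (auto intro: order_trans[OF member_le_sum[of _ UNIV]])
qed (intro finite_PiE; simp)

lemma Pk_eq_monomial_sums:
  "Pk k = {p. \<exists>c. p = (\<lambda>x. \<Sum>\<alpha>\<in>multi_indices_le k. c \<alpha> * multi_monomial \<alpha> x)}"
  unfolding Pk_def multi_indices_le_def multi_monomial_def by simp

lemma Pk_zero: "(\<lambda>x. 0) \<in> Pk k"
  unfolding Pk_eq_monomial_sums by (auto intro!: exI[of _ "\<lambda>_. 0"])

lemma Pk_add:
  assumes "p \<in> Pk k" "q \<in> Pk k"
  shows "(\<lambda>x. p x + q x) \<in> Pk k"
proof -
  obtain c d where "p = (\<lambda>x. \<Sum>\<alpha>\<in>multi_indices_le k. c \<alpha> * multi_monomial \<alpha> x)"
    "q = (\<lambda>x. \<Sum>\<alpha>\<in>multi_indices_le k. d \<alpha> * multi_monomial \<alpha> x)"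
    using assms unfolding Pk_eq_monomial_sums by auto
  then show ?thesis
    unfolding Pk_eq_monomial_sums
    by (intro CollectI exI[of _ "\<lambda>\<alpha>. c \<alpha> + d \<alpha>"]) (simp add: sum.distrib algebra_simps)
qed

lemma Pk_cmult:
  assumes "p \<in> Pk k"
  shows "(\<lambda>x. r * p x) \<in> Pk k"
proof -
  obtain c where "p = (\<lambda>x. \<Sum>\<alpha>\<in>multi_indices_le k. c \<alpha> * multi_monomial \<alpha> x)"
    using assms unfolding Pk_eq_monomial_sums by auto
  then show ?thesis
    unfolding Pk_eq_monomial_sums
    by (intro CollectI exI[of _ "\<lambda>\<alpha>. r * c \<alpha>"]) (simp add: sum_distrib_left algebra_simps)
qed

lemma Pk_diff: "p \<in> Pk k \<Longrightarrow> q \<in> Pk k \<Longrightarrow> (\<lambda>x. p x - q x) \<in> Pk k"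
  using Pk_add[of p k "\<lambda>x. (-1) * q x"] Pk_cmult[of q k "-1"] by simp

lemma Pk_sum: "finite I \<Longrightarrow> (\<And>i. i \<in> I \<Longrightarrow> p i \<in> Pk k) \<Longrightarrow> (\<lambda>x. \<Sum>i\<in>I. p i x) \<in> Pk k"
  by (induction I rule: finite_induct) (auto intro: Pk_zero Pk_add)

lemma multi_monomial_Pk: "\<alpha> \<in> multi_indices_le k \<Longrightarrow> multi_monomial \<alpha> \<in> Pk k"
  unfolding Pk_eq_monomial_sums
  by (rule CollectI, rule exI[of _ "\<lambda>\<beta>. if \<beta> = \<alpha> then 1 else 0"])
     (simp add: if_distrib[of "\<lambda>t. t * _"] sum.delta[OF finite_multi_indices_le] cong: if_cong)

lemma continuous_on_Pk: "p \<in> Pk k \<Longrightarrow> continuous_on S p"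
  unfolding Pk_eq_monomial_sums multi_monomial_def by (auto intro!: continuous_intros)

lemma inner_matrix_vector_Pk:
  fixes g :: "real^'n \<Rightarrow> real^'n"
  assumes "\<And>j. (\<lambda>x. g x $ j) \<in> Pk k"
  shows "(\<lambda>x. (A *v g x) \<bullet> n) \<in> Pk k"
proof -
  have "(\<lambda>x. (A *v g x) \<bullet> n) = (\<lambda>x. \<Sum>i\<in>UNIV. \<Sum>j\<in>UNIV. (n $ i * A $ i $ j) * g x $ j)"
    by (simp add: inner_vec_def matrix_vector_mult_def sum_distrib_left sum_distrib_right mult_ac)
  also have "\<dots> \<in> Pk k"
    by (intro Pk_sum Pk_cmult assms) auto
  finally show ?thesis .
qed

text \<open>The truncated subtraction \<open>\<alpha> j - 1\<close> is harmless: it only matters when \<open>\<alpha> j = 0\<close>,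
  where the factor \<open>real (\<alpha> j)\<close> vanishes.\<close>

definition multi_monomial_grad :: "('n::finite \<Rightarrow> nat) \<Rightarrow> real^'n \<Rightarrow> real^'n" where
  "multi_monomial_grad \<alpha> x = (\<chi> j. real (\<alpha> j) * multi_monomial (\<alpha>(j := \<alpha> j - 1)) x)"

lemma multi_monomial_decrement:
  "multi_monomial (\<alpha>(j := \<alpha> j - 1)) x = (\<Prod>i\<in>UNIV - {j}. x $ i ^ \<alpha> i) * x $ j ^ (\<alpha> j - 1)"
  unfolding multi_monomial_def
  by (subst prod.remove[of UNIV j]) (auto intro!: prod.cong)

lemma has_derivative_multi_monomial:
  "(multi_monomial \<alpha> has_derivative (\<lambda>h. h \<bullet> multi_monomial_grad \<alpha> x)) (at x)"
proof -
  have "((\<lambda>x. \<Prod>i\<in>UNIV. (x $ i) ^ \<alpha> i) has_derivative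
     (\<lambda>h. \<Sum>i\<in>UNIV. (of_nat (\<alpha> i) * h $ i * x $ i ^ (\<alpha> i - 1)) * (\<Prod>j\<in>UNIV - {i}. x $ j ^ \<alpha> j))) (at x)"
    by (intro has_derivative_prod has_derivative_power
          bounded_linear.has_derivative[OF bounded_linear_vec_nth] has_derivative_ident)
  moreover have "(\<lambda>h. \<Sum>i\<in>UNIV. (of_nat (\<alpha> i) * h $ i * x $ i ^ (\<alpha> i - 1)) * (\<Prod>j\<in>UNIV - {i}. x $ j ^ \<alpha> j))
     = (\<lambda>h. h \<bullet> multi_monomial_grad \<alpha> x)"
    unfolding multi_monomial_grad_def inner_vec_def multi_monomial_decrement
    by (auto intro!: sum.cong)
  ultimately show ?thesis unfolding multi_monomial_def by simp
qed

lemma grad_eqI: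
  assumes "GDERIV p x :> D"
  shows "grad p x = D"
  unfolding grad_def
proof (rule the_equality)
  show "GDERIV p x :> D" by (fact assms)
next
  fix D' assume "GDERIV p x :> D'"
  then have "(\<lambda>h. h \<bullet> D') = (\<lambda>h. h \<bullet> D)"
    using has_derivative_unique assms unfolding gderiv_def by blast
  then have "(D' - D) \<bullet> D' = (D' - D) \<bullet> D" by metis
  then have "(D' - D) \<bullet> (D' - D) = 0" by (simp add: inner_diff_right)
  then show "D' = D" by simp
qed

lemma grad_zero: "grad (\<lambda>x. 0::real) x = 0"
  by (rule grad_eqI) (rule GDERIV_const)

lemma grad_monomial_sum:
  "grad (\<lambda>x. \<Sum>\<alpha>\<in>multi_indices_le k. c \<alpha> * multi_monomial \<alpha> x) x
     = (\<Sum>\<alpha>\<in>multi_indices_le k. c \<alpha> *\<^sub>R multi_monomial_grad \<alpha> x)"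
proof (rule grad_eqI)
  have "((\<lambda>x. \<Sum>\<alpha>\<in>multi_indices_le k. c \<alpha> * multi_monomial \<alpha> x) has_derivative
      (\<lambda>h. \<Sum>\<alpha>\<in>multi_indices_le k. c \<alpha> * (h \<bullet> multi_monomial_grad \<alpha> x))) (at x)"
    by (intro has_derivative_sum has_derivative_mult_right has_derivative_multi_monomial)
  then show "GDERIV (\<lambda>x. \<Sum>\<alpha>\<in>multi_indices_le k. c \<alpha> * multi_monomial \<alpha> x) x
      :> (\<Sum>\<alpha>\<in>multi_indices_le k. c \<alpha> *\<^sub>R multi_monomial_grad \<alpha> x)"
    unfolding gderiv_def by (simp add: inner_sum_right)
qed

lemma grad_component_Pk:
  assumes "p \<in> Pk k"
  shows "(\<lambda>x. grad p x $ j) \<in> Pk k"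
proof -
  obtain c where c: "p = (\<lambda>x. \<Sum>\<alpha>\<in>multi_indices_le k. c \<alpha> * multi_monomial \<alpha> x)"
    using assms unfolding Pk_eq_monomial_sums by auto
  have "(\<lambda>x. grad p x $ j)
      = (\<lambda>x. \<Sum>\<alpha>\<in>multi_indices_le k. (c \<alpha> * real (\<alpha> j)) * multi_monomial (\<alpha>(j := \<alpha> j - 1)) x)"
    unfolding c grad_monomial_sum multi_monomial_grad_def by (simp add: sum_component algebra_simps)
  also have "\<dots> \<in> Pk k"
  proof (intro Pk_sum[OF finite_multi_indices_le] Pk_cmult multi_monomial_Pk)
    fix \<alpha> :: "'a \<Rightarrow> nat" assume "\<alpha> \<in> multi_indices_le k"
    moreover have "(\<Sum>i\<in>UNIV. (\<alpha>(j := \<alpha> j - 1)) i) \<le> (\<Sum>i\<in>UNIV. \<alpha> i)"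
      by (intro sum_mono) auto
    ultimately show "\<alpha>(j := \<alpha> j - 1) \<in> multi_indices_le k"
      unfolding multi_indices_le_def by simp
  qed
  finally show ?thesis .
qed

section \<open>Simplices, faces and outward normals\<close>

definition simplex_vertices :: "(real^'n) set \<Rightarrow> bool" where
  "simplex_vertices V \<longleftrightarrow> finite V \<and> card V = CARD('n) + 1 \<and> \<not> affine_dependent V"

lemma mesh_simplex_vertices:
  fixes T :: "(real^'n) set set"
  assumes "conforming_simplicial_mesh \<Omega> T" "V \<in> T"
  shows "simplex_vertices V"
  using assms unfolding conforming_simplicial_mesh_def simplex_vertices_def by (elim conjE) simp

lemma mesh_convex_hull_Int:
  fixes T :: "(real^'n) set set"
  assumes "conforming_simplicial_mesh \<Omega> T" "V1 \<in> T" "V2 \<in> T" "V1 \<noteq> V2"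
  shows "convex hull V1 \<inter> convex hull V2 = convex hull (V1 \<inter> V2)"
  using assms unfolding conforming_simplicial_mesh_def by (elim conjE) simp

lemma simplex_face_opposite_vertex:
  fixes V F :: "(real^'n) set"
  assumes "simplex_vertices V" "is_face V F"
  obtains q where "V = insert q F" "q \<notin> F"
proof -
  have "finite V" "card V = CARD('n) + 1" "F \<subseteq> V" "card F = CARD('n)"
    using assms unfolding simplex_vertices_def is_face_def by auto
  then have "card (V - F) = 1" by (simp add: card_Diff_subset finite_subset)
  then obtain q where "V - F = {q}" by (rule card_1_singletonE)
  then show ?thesis using that assms(2) unfolding is_face_def by blast
qed

lemma simplex_face_finite: "simplex_vertices V \<Longrightarrow> is_face V F \<Longrightarrow> finite F"
  unfolding simplex_vertices_def is_face_def using finite_subset by blast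

lemma simplex_face_nonempty: "is_face V (F :: (real^'n) set) \<Longrightarrow> F \<noteq> {}"
  unfolding is_face_def by auto

lemma span_vertex_differences_UNIV:
  fixes V :: "(real^'n) set"
  assumes "simplex_vertices V" "f0 \<in> V"
  shows "span ((\<lambda>v. v - f0) ` V) = UNIV"
proof -
  let ?B = "(\<lambda>x. -f0 + x) ` (V - {f0})"
  have ind: "independent ?B"
    using affine_dependent_iff_dependent[of f0 "V - {f0}"] assms insert_Diff[OF assms(2)]
    unfolding simplex_vertices_def by auto
  have "card ?B = card (V - {f0})" by (rule card_image) (auto simp: inj_on_def)
  also have "\<dots> = CARD('n)" using assms unfolding simplex_vertices_def by simp
  finally have "span ?B = UNIV"
    using dim_span_eq_card_independent[OF ind] dim_eq_full[of ?B] by (simp add: dim_span)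
  moreover have "?B \<subseteq> (\<lambda>v. v - f0) ` V" by auto
  ultimately show ?thesis by (metis span_mono top.extremum_uniqueI)
qed

lemma orthogonal_spanning_eq_0:
  fixes m :: "'a::euclidean_space"
  assumes "span S = UNIV" "\<And>y. y \<in> S \<Longrightarrow> m \<bullet> y = 0"
  shows "m = 0"
proof -
  have "orthogonal m m" by (rule orthogonal_to_span) (use assms in \<open>auto simp: orthogonal_def\<close>)
  then show ?thesis by (simp add: orthogonal_def)
qed

lemma exists_normal_through_points:
  fixes F :: "(real^'n) set"
  assumes "finite F" "card F \<le> CARD('n)" "f0 \<in> F"
  obtains m where "m \<noteq> 0" "\<forall>x\<in>F. m \<bullet> (x - f0) = 0"
proof -
  let ?S = "(\<lambda>x. x - f0) ` (F - {f0})"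
  have "dim ?S \<le> card ?S" by (rule dim_le_card) (auto intro: span_base simp: assms)
  also have "\<dots> \<le> card (F - {f0})" by (rule card_image_le) (simp add: assms)
  also have "\<dots> < CARD('n)" using assms card_gt_0_iff[of F] by (auto simp: card_Diff_singleton)
  finally obtain m where m: "m \<noteq> 0" "\<And>y. y \<in> span ?S \<Longrightarrow> orthogonal m y"
    using orthogonal_to_subspace_exists[of ?S] by auto
  have "m \<bullet> (x - f0) = 0" if "x \<in> F" for x
  proof (cases "x = f0")
    case False
    then have "x - f0 \<in> span ?S" using that by (intro span_base) auto
    then show ?thesis using m(2) by (simp add: orthogonal_def)
  qed simp
  then show ?thesis using that m(1) by blast
qed

lemma convex_hull_in_hyperplane:
  assumes "\<forall>x\<in>F. n \<bullet> (x - f0) = 0" "y \<in> convex hull F"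
  shows "n \<bullet> (y - f0) = 0"
proof -
  have "convex hull F \<subseteq> {y. n \<bullet> y = n \<bullet> f0}"
    by (rule hull_minimal) (use assms in \<open>auto simp: inner_diff_right convex_hyperplane\<close>)
  then show ?thesis using assms(2) by (auto simp: inner_diff_right)
qed

lemma inner_differences_eq_0:
  assumes "\<forall>x\<in>F. n \<bullet> (x - f0) = 0" "x \<in> F" "y \<in> F"
  shows "n \<bullet> (x - y) = 0"
  using assms inner_diff_right[of n "x - f0" "y - f0"] by simp

lemma vertex_off_face_hyperplane:
  fixes V F :: "(real^'n) set"
  assumes "simplex_vertices V" "V = insert q F" "f0 \<in> F" "\<forall>x\<in>F. n \<bullet> (x - f0) = 0" "n \<noteq> 0"
  shows "n \<bullet> (q - f0) \<noteq> 0"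
proof
  assume "n \<bullet> (q - f0) = 0"
  then have "n = 0"
    using assms by (intro orthogonal_spanning_eq_0[OF span_vertex_differences_UNIV[of V f0]]) auto
  with assms(5) show False ..
qed

lemma hyperplane_subset_affine_hull_face:
  fixes V F :: "(real^'n) set"
  assumes simplex: "simplex_vertices V" and face: "is_face V F" and f0: "f0 \<in> F"
    and n: "\<forall>x\<in>F. n \<bullet> (x - f0) = 0" "n \<noteq> 0" and w: "n \<bullet> (w - f0) = 0"
  shows "w \<in> affine hull F"
proof -
  obtain q where q: "V = insert q F" using simplex_face_opposite_vertex[OF simplex face] by blast
  define D where "D = (\<lambda>v. v - f0) ` F"
  have "span (insert (q - f0) D) = UNIV"
    using span_vertex_differences_UNIV[OF simplex, of f0] q f0 unfolding D_def by simp
  then obtain lam where lam: "w - f0 - lam *\<^sub>R (q - f0) \<in> span D"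
    using span_breakdown_eq by blast
  have "n \<bullet> (w - f0 - lam *\<^sub>R (q - f0)) = 0"
    using orthogonal_to_span[OF lam, of n] n(1) unfolding D_def orthogonal_def by auto
  then have "lam = 0"
    using w vertex_off_face_hyperplane[OF simplex q f0 n] by (simp add: inner_diff_right)
  then have "w - f0 \<in> span D" using lam by simp
  moreover have "D = insert 0 ((\<lambda>x. -f0 + x) ` (F - {f0}))" unfolding D_def using f0 by force
  ultimately show ?thesis
    unfolding affine_hull_span2[OF f0] by (intro image_eqI[of _ _ "w - f0"]) auto
qed

lemma face_relative_interior_ball:
  fixes V F :: "(real^'n) set"
  assumes simplex: "simplex_vertices V" and face: "is_face V F"
    and n: "n \<noteq> 0" "\<forall>x\<in>F. \<forall>y\<in>F. n \<bullet> (x - y) = 0"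
  obtains c e where "c \<in> convex hull F" "0 < e"
    "\<And>y. n \<bullet> (y - c) = 0 \<Longrightarrow> dist c y < e \<Longrightarrow> y \<in> convex hull F"
proof -
  obtain f0 where f0: "f0 \<in> F" using simplex_face_nonempty[OF face] by blast
  have nF: "\<forall>x\<in>F. n \<bullet> (x - f0) = 0" using n(2) f0 by blast
  obtain c where "c \<in> rel_interior (convex hull F)"
    using rel_interior_eq_empty[of "convex hull F"] f0 by (auto simp: hull_inc)
  then obtain e where e: "0 < e" "ball c e \<inter> affine hull F \<subseteq> convex hull F" "c \<in> convex hull F"
    unfolding mem_rel_interior_ball affine_hull_convex_hull by blast
  have "y \<in> convex hull F" if "n \<bullet> (y - c) = 0" "dist c y < e" for y
  proof -
    have "n \<bullet> (y - f0) = n \<bullet> (y - c) + n \<bullet> (c - f0)" by (simp add: inner_diff_right)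
    then have "n \<bullet> (y - f0) = 0" using that(1) convex_hull_in_hyperplane[OF nF e(3)] by simp
    then have "y \<in> affine hull F"
      by (rule hyperplane_subset_affine_hull_face[OF simplex face f0 nF n(1)])
    then show ?thesis using e(2) that(2) by auto
  qed
  then show ?thesis using that e by blast
qed

definition is_outward_normal :: "(real^'n) set \<Rightarrow> (real^'n) set \<Rightarrow> real^'n \<Rightarrow> bool" where
  "is_outward_normal V F n \<longleftrightarrow> norm n = 1 \<and> (\<forall>x\<in>F. \<forall>y\<in>F. n \<bullet> (x - y) = 0) \<and>
     (\<forall>x\<in>F. \<forall>q\<in>V - F. n \<bullet> (q - x) < 0)"

lemma is_outward_normal_unique:
  fixes V F :: "(real^'n) set"
  assumes simplex: "simplex_vertices V" and face: "is_face V F"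
    and n1: "is_outward_normal V F n1" and n2: "is_outward_normal V F n2"
  shows "n1 = n2"
proof -
  obtain q where q: "V = insert q F" "q \<notin> F" using simplex_face_opposite_vertex[OF simplex face] .
  obtain f0 where f0: "f0 \<in> F" using simplex_face_nonempty[OF face] by blast
  define a where "a = n1 \<bullet> (q - f0)"
  define b where "b = n2 \<bullet> (q - f0)"
  have ab: "a < 0" "b < 0" using n1 n2 q f0 unfolding is_outward_normal_def a_def b_def by auto
  have "b *\<^sub>R n1 - a *\<^sub>R n2 = 0"
  proof (rule orthogonal_spanning_eq_0[OF span_vertex_differences_UNIV[OF simplex, of f0]])
    fix y assume "y \<in> (\<lambda>v. v - f0) ` V"
    then consider "y = q - f0" | x where "x \<in> F" "y = x - f0" using q by auto
    then show "(b *\<^sub>R n1 - a *\<^sub>R n2) \<bullet> y = 0"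
      by cases (use n1 n2 f0 in \<open>auto simp: a_def b_def is_outward_normal_def inner_diff_left\<close>)
  qed (use q f0 in auto)
  then have e: "b *\<^sub>R n1 = a *\<^sub>R n2" by simp
  have "norm (b *\<^sub>R n1) = norm (a *\<^sub>R n2)" using e by simp
  then have "\<bar>b\<bar> = \<bar>a\<bar>" using n1 n2 unfolding is_outward_normal_def by simp
  then have "a = b" using ab by arith
  then show ?thesis using e ab(2) by simp
qed

lemma is_outward_normal_exists:
  fixes V F :: "(real^'n) set"
  assumes simplex: "simplex_vertices V" and face: "is_face V F"
  obtains n where "is_outward_normal V F n"
proof -
  obtain q where q: "V = insert q F" "q \<notin> F" using simplex_face_opposite_vertex[OF simplex face] .
  obtain f0 where f0: "f0 \<in> F" using simplex_face_nonempty[OF face] by blast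
  obtain m where m: "m \<noteq> 0" "\<forall>x\<in>F. m \<bullet> (x - f0) = 0"
    using exists_normal_through_points[of F f0] simplex_face_finite[OF simplex face] face f0
    unfolding is_face_def by auto
  define s where "s = m \<bullet> (q - f0)"
  have "s \<noteq> 0" unfolding s_def by (rule vertex_off_face_hyperplane[OF simplex q(1) f0 m(2,1)])
  define n where "n = (- sgn s / norm m) *\<^sub>R m"
  note mF = inner_differences_eq_0[OF m(2)]
  have "norm n = 1" using m(1) \<open>s \<noteq> 0\<close> by (simp add: n_def abs_sgn)
  moreover have "\<forall>x\<in>F. \<forall>y\<in>F. n \<bullet> (x - y) = 0" using mF by (simp add: n_def)
  moreover have "n \<bullet> (q - x) < 0" if "x \<in> F" for x
  proof -
    have "m \<bullet> (q - x) = s" using mF[OF that f0] by (simp add: s_def inner_diff_right)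
    moreover have "sgn s * s = \<bar>s\<bar>" by (simp add: sgn_if)
    ultimately have "n \<bullet> (q - x) = - \<bar>s\<bar> / norm m" by (simp add: n_def)
    then show ?thesis using \<open>s \<noteq> 0\<close> m(1) by simp
  qed
  ultimately have "is_outward_normal V F n" using q unfolding is_outward_normal_def by auto
  then show ?thesis by (rule that)
qed

lemma onormal_is_outward_normal:
  assumes "simplex_vertices V" "is_face V F"
  shows "is_outward_normal V F (onormal V F)"
proof -
  obtain n where n: "is_outward_normal V F n" using is_outward_normal_exists[OF assms] .
  have "onormal V F = (THE n. is_outward_normal V F n)"
    unfolding onormal_def is_outward_normal_def ..
  also have "is_outward_normal V F \<dots>"
    by (rule theI[of _ n]) (use n is_outward_normal_unique[OF assms] in auto)
  finally show ?thesis .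
qed

lemma norm_onormal:
  assumes "simplex_vertices V" "is_face V F"
  shows "norm (onormal V F) = 1"
  using onormal_is_outward_normal[OF assms] unfolding is_outward_normal_def by (elim conjE)

lemma inner_onormal_self:
  assumes "simplex_vertices V" "is_face V F"
  shows "onormal V F \<bullet> onormal V F = 1"
  using norm_onormal[OF assms] by (simp only: norm_eq_1)

section \<open>Two elements sharing a face\<close>

text \<open>The witness is \<open>(1 - s) c + s q1 = (1 - s \<lambda>) y + s \<lambda> q2\<close>, where \<open>\<lambda>\<close> balances the heights of
  \<open>q1\<close> and \<open>q2\<close> over the hyperplane, so that \<open>y = c + t ((q1 - c) - \<lambda> (q2 - c))\<close> lies in it.\<close>

lemma segment_enters_simplex_through_face:
  fixes F :: "(real^'n) set"
  assumes c: "c \<in> convex hull F" "0 < e" "\<And>y. n \<bullet> (y - c) = 0 \<Longrightarrow> dist c y < e \<Longrightarrow> y \<in> convex hull F"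
    and below: "n \<bullet> (q1 - c) < 0" "n \<bullet> (q2 - c) < 0"
  obtains s where "0 < s" "s \<le> 1" "(1 - s) *\<^sub>R c + s *\<^sub>R q1 \<in> convex hull (insert q2 F)"
proof -
  define lam where "lam = (n \<bullet> (q1 - c)) / (n \<bullet> (q2 - c))"
  have lam: "0 < lam" using below by (simp add: lam_def divide_neg_neg)
  define w where "w = (q1 - c) - lam *\<^sub>R (q2 - c)"
  have nw: "n \<bullet> w = 0" using below(2) by (simp add: w_def lam_def inner_diff_right)
  define t where "t = e / (norm w + e)"
  have t: "0 < t" "t \<le> 1" "t * norm w < e"
  proof -
    have d: "0 < norm w + e" using c(2) by (simp add: add_nonneg_pos)
    show "0 < t" "t \<le> 1" using c(2) d by (simp_all add: t_def)
    have "e * norm w < e * (norm w + e)" using c(2) by simp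
    then show "t * norm w < e" using d by (simp add: t_def field_simps)
  qed
  define s where "s = t / (1 + t * lam)"
  have s: "0 < s" "s \<le> 1" "0 \<le> s * lam" "s * lam \<le> 1" "(1 - s * lam) * t = s"
  proof -
    have "0 < lam * t" using t(1) lam by simp
    then have "0 < 1 + lam * t" "0 < 1 + t * lam" "t \<le> 1 + lam * t"
      using t(2) by (simp_all add: mult.commute)
    then show "0 < s" "s \<le> 1" "0 \<le> s * lam" "s * lam \<le> 1" "(1 - s * lam) * t = s"
      using t lam by (auto simp: s_def field_simps)
  qed
  have y: "c + t *\<^sub>R w \<in> convex hull F"
    using nw t(1,3) by (intro c(3)) (auto simp: dist_norm)
  have "(1 - s) *\<^sub>R c + s *\<^sub>R q1 = (1 - s * lam) *\<^sub>R c + ((1 - s * lam) * t) *\<^sub>R w + (s * lam) *\<^sub>R q2"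
    unfolding s(5) w_def by (simp add: algebra_simps)
  also have "\<dots> = (1 - s * lam) *\<^sub>R (c + t *\<^sub>R w) + (s * lam) *\<^sub>R q2"
    by (simp add: algebra_simps)
  also have "\<dots> \<in> convex hull (insert q2 F)"
  proof (rule convexD[OF convex_convex_hull])
    show "c + t *\<^sub>R w \<in> convex hull (insert q2 F)" using y by (rule subsetD[OF hull_mono[OF subset_insertI]])
    show "q2 \<in> convex hull (insert q2 F)" by (rule hull_inc) simp
  qed (use s in auto)
  finally show ?thesis using that s(1,2) by blast
qed

text \<open>If the opposite vertices \<open>q1\<close>, \<open>q2\<close> were on the same side of the face, the segment from a
  relative interior point of the face towards \<open>q1\<close> would start inside both simplices,
  contradicting conformity.\<close>

lemma conforming_simplices_opposite_sides:
  fixes V1 V2 F :: "(real^'n) set"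
  assumes simplex: "simplex_vertices V2" and face: "is_face V2 F" and V2: "V2 = insert q2 F"
    and f0: "f0 \<in> F" and n: "n \<noteq> 0" "\<forall>x\<in>F. n \<bullet> (x - f0) = 0"
    and q1: "q1 \<in> convex hull V1" "n \<bullet> (q1 - f0) < 0"
    and F_V1: "convex hull F \<subseteq> convex hull V1"
    and conf: "convex hull V1 \<inter> convex hull V2 \<subseteq> convex hull F"
  shows "0 < n \<bullet> (q2 - f0)"
proof (rule ccontr)
  assume "\<not> 0 < n \<bullet> (q2 - f0)"
  moreover have "n \<bullet> (q2 - f0) \<noteq> 0" by (rule vertex_off_face_hyperplane[OF simplex V2 f0 n(2,1)])
  ultimately have q2: "n \<bullet> (q2 - f0) < 0" by simp
  obtain c e where c: "c \<in> convex hull F" "0 < e"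
    "\<And>y. n \<bullet> (y - c) = 0 \<Longrightarrow> dist c y < e \<Longrightarrow> y \<in> convex hull F"
    using face_relative_interior_ball[OF simplex face n(1)] inner_differences_eq_0[OF n(2)] by blast
  have nc: "n \<bullet> (c - f0) = 0" by (rule convex_hull_in_hyperplane[OF n(2) c(1)])
  have "n \<bullet> (q - c) = n \<bullet> (q - f0)" for q
    using nc by (simp add: inner_diff_right)
  then have below: "n \<bullet> (q1 - c) < 0" "n \<bullet> (q2 - c) < 0" using q1(2) q2 by simp_all
  obtain s where s: "0 < s" "s \<le> 1" "(1 - s) *\<^sub>R c + s *\<^sub>R q1 \<in> convex hull V2"
    unfolding V2 by (rule segment_enters_simplex_through_face[OF c below])
  have "(1 - s) *\<^sub>R c + s *\<^sub>R q1 \<in> convex hull V1"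
    using c(1) F_V1 q1(1) s by (intro convexD[OF convex_convex_hull]) auto
  then have "n \<bullet> ((1 - s) *\<^sub>R c + s *\<^sub>R q1 - f0) = 0"
    using s(3) conf convex_hull_in_hyperplane[OF n(2)] by blast
  moreover have "n \<bullet> ((1 - s) *\<^sub>R c + s *\<^sub>R q1 - f0) = s * (n \<bullet> (q1 - f0))"
    using nc by (simp add: algebra_simps inner_diff_right)
  ultimately show False using s(1) q1(2) by (simp add: mult_pos_neg)
qed

lemma onormal_adjacent:
  fixes V1 V2 F :: "(real^'n) set"
  assumes simplex: "simplex_vertices V1" "simplex_vertices V2" and ne: "V1 \<noteq> V2"
    and face: "is_face V1 F" "is_face V2 F"
    and conf: "convex hull V1 \<inter> convex hull V2 = convex hull (V1 \<inter> V2)"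
  shows "onormal V2 F = - onormal V1 F"
proof -
  define n where "n = onormal V1 F"
  have n: "is_outward_normal V1 F n" unfolding n_def by (rule onormal_is_outward_normal[OF simplex(1) face(1)])
  obtain q1 where q1: "V1 = insert q1 F" "q1 \<notin> F" using simplex_face_opposite_vertex[OF simplex(1) face(1)] .
  obtain q2 where q2: "V2 = insert q2 F" "q2 \<notin> F" using simplex_face_opposite_vertex[OF simplex(2) face(2)] .
  obtain f0 where f0: "f0 \<in> F" using simplex_face_nonempty[OF face(1)] by blast
  have "V1 \<inter> V2 = F" using q1 q2 ne by auto
  have nF: "\<forall>x\<in>F. n \<bullet> (x - f0) = 0" and "n \<noteq> 0" and nq1: "n \<bullet> (q1 - f0) < 0"
    using n f0 q1 unfolding is_outward_normal_def by auto
  have "q1 \<in> convex hull V1" by (simp add: q1 hull_inc)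
  moreover have "convex hull F \<subseteq> convex hull V1" by (rule hull_mono) (simp add: q1 subset_insertI)
  moreover have "convex hull V1 \<inter> convex hull V2 \<subseteq> convex hull F" using conf \<open>V1 \<inter> V2 = F\<close> by simp
  ultimately have nq2: "0 < n \<bullet> (q2 - f0)"
    by (rule conforming_simplices_opposite_sides[OF simplex(2) face(2) q2(1) f0 \<open>n \<noteq> 0\<close> nF _ nq1])
  have "is_outward_normal V2 F (- n)"
    unfolding is_outward_normal_def
  proof (intro conjI ballI)
    fix x q assume "x \<in> F" "q \<in> V2 - F"
    then have "q = q2" "n \<bullet> (x - f0) = 0" using q2 nF by auto
    then show "- n \<bullet> (q - x) < 0"
      using nq2 inner_diff_right[of n "q2 - f0" "x - f0"] by simp
  qed (use n in \<open>auto simp: is_outward_normal_def\<close>)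
  then show ?thesis
    unfolding n_def using is_outward_normal_unique[OF simplex(2) face(2) onormal_is_outward_normal[OF simplex(2) face(2)]] by blast
qed

lemma elements_sharing_face:
  fixes T :: "(real^'n) set set"
  assumes mesh: "conforming_simplicial_mesh \<Omega> T"
    and V: "V1 \<in> T" "V2 \<in> T" "V1 \<noteq> V2" and face: "is_face V1 F" "is_face V2 F"
  shows "{V \<in> T. is_face V F} = {V1, V2}"
proof (intro equalityI subsetI)
  fix V3 assume "V3 \<in> {V \<in> T. is_face V F}"
  then have V3: "V3 \<in> T" "is_face V3 F" by auto
  have adjacent: "onormal V' F = - onormal V F"
    if "V \<in> T" "V' \<in> T" "V \<noteq> V'" "is_face V F" "is_face V' F" for V V'
    using that by (intro onormal_adjacent mesh_simplex_vertices[OF mesh] mesh_convex_hull_Int[OF mesh])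
  show "V3 \<in> {V1, V2}"
  proof (rule ccontr)
    assume "V3 \<notin> {V1, V2}"
    then have "V1 \<noteq> V3" "V2 \<noteq> V3" by auto
    then have "onormal V3 F = - onormal V1 F" "onormal V3 F = - onormal V2 F"
      using adjacent[OF V(1) V3(1) _ face(1) V3(2)] adjacent[OF V(2) V3(1) _ face(2) V3(2)] by blast+
    moreover have "onormal V2 F = - onormal V1 F" by (rule adjacent[OF V face])
    ultimately have "onormal V1 F = - onormal V1 F" by simp
    then have "onormal V1 F \<bullet> onormal V1 F = - (onormal V1 F \<bullet> onormal V1 F)"
      by (metis inner_minus_right)
    then show False using inner_onormal_self[OF mesh_simplex_vertices[OF mesh V(1)] face(1)] by simp
  qed
qed (use V face in auto)

section \<open>Integrals over faces\<close>

lemma fnormal: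
  fixes V F :: "(real^'n) set"
  assumes simplex: "simplex_vertices V" and face: "is_face V F"
  shows "norm (fnormal F) = 1" "\<forall>x\<in>F. \<forall>y\<in>F. fnormal F \<bullet> (x - y) = 0"
proof -
  obtain f0 where f0: "f0 \<in> F" using simplex_face_nonempty[OF face] by blast
  obtain m where m: "m \<noteq> 0" "\<forall>x\<in>F. m \<bullet> (x - f0) = 0"
    using exists_normal_through_points[of F f0] simplex_face_finite[OF simplex face] face f0
    unfolding is_face_def by auto
  have "norm (m /\<^sub>R norm m) = 1 \<and> (\<forall>x\<in>F. \<forall>y\<in>F. (m /\<^sub>R norm m) \<bullet> (x - y) = 0)"
    using m(1) inner_differences_eq_0[OF m(2)] by simp
  then have "norm (fnormal F) = 1 \<and> (\<forall>x\<in>F. \<forall>y\<in>F. fnormal F \<bullet> (x - y) = 0)"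
    unfolding fnormal_def by (rule someI)
  then show "norm (fnormal F) = 1" "\<forall>x\<in>F. \<forall>y\<in>F. fnormal F \<bullet> (x - y) = 0" by auto
qed

lemma fproj_add_fnormal:
  fixes V F :: "(real^'n) set"
  assumes simplex: "simplex_vertices V" and face: "is_face V F" and x: "x \<in> convex hull F"
  shows "fproj F (x + t *\<^sub>R fnormal F) = x"
proof -
  define x0 where "x0 = (SOME x. x \<in> F)"
  have x0: "x0 \<in> F" using simplex_face_nonempty[OF face] unfolding x0_def by (simp add: some_in_eq)
  have "fnormal F \<bullet> (x - x0) = 0"
    by (rule convex_hull_in_hyperplane[OF _ x]) (use fnormal(2)[OF simplex face] x0 in auto)
  moreover have "fnormal F \<bullet> fnormal F = 1" using fnormal(1)[OF simplex face] by (simp add: norm_eq_1)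
  ultimately have "(x + t *\<^sub>R fnormal F - x0) \<bullet> fnormal F = t"
    by (simp add: inner_commute inner_diff_left inner_add_left algebra_simps)
  then show ?thesis unfolding fproj_def x0_def[symmetric] by simp
qed

lemma compact_prism:
  assumes "finite F"
  shows "compact (prism F)"
proof -
  have "prism F = (\<lambda>p. fst p + snd p *\<^sub>R fnormal F) ` ((convex hull F) \<times> {0..1})"
    (is "_ = ?image")
  proof (intro set_eqI iffI)
    fix z assume "z \<in> prism F"
    then obtain x t where "z = x + t *\<^sub>R fnormal F" "x \<in> convex hull F" "0 \<le> t" "t \<le> 1"
      unfolding prism_def by blast
    then show "z \<in> ?image" by (intro image_eqI[of _ _ "(x, t)"]) auto
  qed (force simp: prism_def)
  moreover have "compact (convex hull F)" using assms by (rule finite_imp_compact_convex_hull)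
  ultimately show ?thesis by (auto intro!: compact_continuous_image continuous_intros compact_Times)
qed

lemma integrable_on_compact:
  fixes h :: "'a::euclidean_space \<Rightarrow> real"
  assumes "compact P" "continuous_on UNIV h"
  shows "h integrable_on P"
proof -
  have "integrable lborel (\<lambda>x. indicator P x *\<^sub>R h x)"
    by (rule borel_integrable_compact[OF assms(1) continuous_on_subset[OF assms(2)]]) simp
  then have "(\<lambda>x. indicator P x *\<^sub>R h x) integrable_on UNIV" by (rule integrable_on_lborel)
  moreover have "(\<lambda>x. indicator P x *\<^sub>R h x) = (\<lambda>x. if x \<in> P then h x else 0)"
    by (auto simp: indicator_def)
  ultimately show ?thesis by (simp add: integrable_restrict_UNIV)
qed

lemma face_integrable:
  fixes g :: "real^'n \<Rightarrow> real"
  assumes "finite F" "continuous_on UNIV g"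
  shows "(\<lambda>y. g (fproj F y)) integrable_on prism F"
  by (rule integrable_on_compact[OF compact_prism[OF assms(1)]])
     (auto intro: continuous_on_compose2[OF assms(2)] simp: fproj_def intro!: continuous_intros)

lemma face_integral_add:
  fixes g1 g2 :: "real^'n \<Rightarrow> real"
  assumes "finite F" "continuous_on UNIV g1" "continuous_on UNIV g2"
  shows "face_integral F (\<lambda>x. g1 x + g2 x) = face_integral F g1 + face_integral F g2"
  unfolding face_integral_def
  by (rule integral_add[OF face_integrable[OF assms(1,2)] face_integrable[OF assms(1,3)]])

lemma continuous_nonneg_integral_eq_0_ball:
  fixes h :: "'a::euclidean_space \<Rightarrow> real"
  assumes cont: "continuous_on UNIV h" and nonneg: "\<And>y. 0 \<le> h y"
    and int: "h integrable_on P" "integral P h = 0" and ball: "0 < r" "ball y0 r \<subseteq> P"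
  shows "h y0 = 0"
proof -
  have "y0 \<in> ball y0 r" using ball(1) by simp
  then obtain a b where ab: "cbox a b \<subseteq> ball y0 r" "y0 \<in> box a b" "\<forall>i\<in>Basis. a \<bullet> i < b \<bullet> i"
    by (rule open_contains_cbox[OF open_ball])
  have cont_ab: "continuous_on (cbox a b) h" by (rule continuous_on_subset[OF cont]) simp
  then have "integral (cbox a b) h \<le> integral P h"
    using ab ball int nonneg by (intro integral_subset_le integrable_continuous) auto
  moreover have "0 \<le> integral (cbox a b) h"
    using cont_ab nonneg by (intro integral_nonneg integrable_continuous)
  ultimately have "integral (cbox a b) h = 0" using int(2) by simp
  moreover have "box a b \<noteq> {}" using ab(2) by auto
  ultimately have "\<forall>y\<in>cbox a b. h y = 0" using integral_cbox_eq_0_iff[OF cont_ab] nonneg by simp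
  then show ?thesis using ab(2) box_subset_cbox[of a b] by blast
qed

lemma norm_orthogonal_projection_le:
  fixes v n :: "'a::real_inner"
  assumes "norm n = 1"
  shows "norm (v - (v \<bullet> n) *\<^sub>R n) \<le> norm v"
proof -
  have "(v - (v \<bullet> n) *\<^sub>R n) \<bullet> (v - (v \<bullet> n) *\<^sub>R n) = v \<bullet> v - (v \<bullet> n)\<^sup>2"
    using assms by (simp add: inner_diff_left inner_diff_right norm_eq_1 inner_commute power2_eq_square)
  also have "\<dots> \<le> v \<bullet> v" by simp
  finally show ?thesis by (simp add: norm_le)
qed

lemma ball_subset_prism:
  fixes V F :: "(real^'n) set"
  assumes simplex: "simplex_vertices V" and face: "is_face V F"
    and x: "x \<in> convex hull F" and c: "c \<in> convex hull F"
    and ball: "\<And>y. fnormal F \<bullet> (y - c) = 0 \<Longrightarrow> dist c y < e \<Longrightarrow> y \<in> convex hull F"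
    and s: "0 < s" "s \<le> 1"
  shows "ball ((1 - s) *\<^sub>R x + s *\<^sub>R c + (1/2) *\<^sub>R fnormal F) (min (s * e) (1/2)) \<subseteq> prism F"
proof
  let ?n = "fnormal F"
  have n: "norm ?n = 1" "?n \<bullet> ?n = 1" using fnormal(1)[OF simplex face] by (simp_all add: norm_eq_1)
  fix z assume "z \<in> ball ((1 - s) *\<^sub>R x + s *\<^sub>R c + (1/2) *\<^sub>R ?n) (min (s * e) (1/2))"
  then obtain v where v: "z = (1 - s) *\<^sub>R x + s *\<^sub>R c + (1/2) *\<^sub>R ?n + v" "norm v < min (s * e) (1/2)"
    by (metis add_diff_cancel_left' diff_add_cancel dist_norm mem_ball norm_minus_commute)
  define w where "w = v - (v \<bullet> ?n) *\<^sub>R ?n"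
  define t where "t = 1/2 + v \<bullet> ?n"
  have "\<bar>v \<bullet> ?n\<bar> \<le> norm v" using Cauchy_Schwarz_ineq2[of v ?n] n(1) by simp
  then have t: "0 \<le> t" "t \<le> 1" using v(2) unfolding t_def by auto
  have "norm w < s * e"
    using norm_orthogonal_projection_le[OF n(1), of v] v(2) unfolding w_def by simp
  then have "dist c (c + (1/s) *\<^sub>R w) < e" using s(1) by (simp add: dist_norm field_simps)
  moreover have "?n \<bullet> ((c + (1/s) *\<^sub>R w) - c) = 0"
    using n(2) by (simp add: w_def inner_diff_right inner_commute)
  ultimately have "c + (1/s) *\<^sub>R w \<in> convex hull F" using ball by blast
  then have "(1 - s) *\<^sub>R x + s *\<^sub>R (c + (1/s) *\<^sub>R w) \<in> convex hull F"
    using x s by (intro convexD[OF convex_convex_hull]) auto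
  moreover have "z = (1 - s) *\<^sub>R x + s *\<^sub>R (c + (1/s) *\<^sub>R w) + t *\<^sub>R ?n"
    using s(1) unfolding v(1) w_def t_def by (simp add: algebra_simps)
  ultimately show "z \<in> prism F" unfolding prism_def using t by blast
qed

text \<open>The integrand, extended constantly along the normal, vanishes on balls filling the prism;
  continuity reaches the relative boundary of the face.\<close>

lemma face_integral_square_eq_0:
  fixes V F :: "(real^'n) set"
  assumes simplex: "simplex_vertices V" and face: "is_face V F" and cont: "continuous_on UNIV g"
    and zero: "face_integral F (\<lambda>x. (g x)\<^sup>2) = 0" and x: "x \<in> convex hull F"
  shows "g x = 0"
proof -
  have "fnormal F \<noteq> 0" using fnormal(1)[OF simplex face] by auto
  then obtain c e where c: "c \<in> convex hull F" "0 < e"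
    "\<And>y. fnormal F \<bullet> (y - c) = 0 \<Longrightarrow> dist c y < e \<Longrightarrow> y \<in> convex hull F"
    using face_relative_interior_ball[OF simplex face _ fnormal(2)[OF simplex face]] by blast
  define h where "h = (\<lambda>y. (g (fproj F y))\<^sup>2)"
  have h_cont: "continuous_on UNIV h"
    unfolding h_def fproj_def by (intro continuous_intros continuous_on_compose2[OF cont]) auto
  have h_int: "h integrable_on prism F" "integral (prism F) h = 0"
    using face_integrable[OF simplex_face_finite[OF simplex face], of "\<lambda>x. (g x)\<^sup>2"] cont zero
    by (simp_all add: h_def face_integral_def continuous_intros)
  have zero_near_c: "g ((1 - s) *\<^sub>R x + s *\<^sub>R c) = 0" if s: "0 < s" "s \<le> 1" for s
  proof -
    have xs: "(1 - s) *\<^sub>R x + s *\<^sub>R c \<in> convex hull F"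
      using x c(1) s by (intro convexD[OF convex_convex_hull]) auto
    have "h ((1 - s) *\<^sub>R x + s *\<^sub>R c + (1/2) *\<^sub>R fnormal F) = 0"
      using s c(2) ball_subset_prism[OF simplex face x c(1) c(3) s]
      by (intro continuous_nonneg_integral_eq_0_ball[OF h_cont _ h_int, of "min (s * e) (1/2)"])
         (auto simp: h_def)
    then show ?thesis unfolding h_def fproj_add_fnormal[OF simplex face xs] by simp
  qed
  have "continuous_on {0..1} (\<lambda>s. g ((1 - s) *\<^sub>R x + s *\<^sub>R c))"
    by (intro continuous_on_compose2[OF cont] continuous_intros) auto
  then have "continuous_on (closure {0<..1}) (\<lambda>s. g ((1 - s) *\<^sub>R x + s *\<^sub>R c))" by simp
  then have "(\<lambda>s. g ((1 - s) *\<^sub>R x + s *\<^sub>R c)) 0 = 0"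
    by (rule continuous_constant_on_closure) (use zero_near_c in auto)
  then show ?thesis by simp
qed

section \<open>The hybridized interior penalty method\<close>

lemma inner_hatsigma_onormal:
  "hatsigma alpha0 CT kap u uh V F x \<bullet> onormal V F =
     - ((kap V *v grad (u V) x) \<bullet> onormal V F)
     + tauEF alpha0 CT kap V F * (u V x - uh F x) * (onormal V F \<bullet> onormal V F)"
  by (simp add: hatsigma_def sigma_def hjump_def inner_add_left inner_diff_left)

lemma normal_flux_Pk:
  assumes "u V \<in> Pk k" "uh F \<in> Pk k"
  shows "(\<lambda>x. hatsigma alpha0 CT kap u uh V F x \<bullet> onormal V F) \<in> Pk k"
proof -
  have "(\<lambda>x. (-1) * ((kap V *v grad (u V) x) \<bullet> onormal V F)
      + (tauEF alpha0 CT kap V F * (onormal V F \<bullet> onormal V F)) * (u V x - uh F x)) \<in> Pk k"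
    by (intro Pk_add Pk_cmult Pk_diff inner_matrix_vector_Pk grad_component_Pk assms)
  then show ?thesis unfolding inner_hatsigma_onormal by (simp add: algebra_simps)
qed

lemma tauEF_pos:
  fixes V F :: "(real^'n) set"
  assumes simplex: "simplex_vertices V" and face: "is_face V F"
    and pos: "0 < alpha0" "0 < CT" "0 < kmin"
    and coercive: "\<forall>\<xi>. kmin * (norm \<xi>)\<^sup>2 \<le> \<xi> \<bullet> (kap V *v \<xi>)"
  shows "0 < tauEF alpha0 CT kap V F"
proof -
  have "kmin * (norm (onormal V F))\<^sup>2 \<le> kappaEF kap V F"
    using coercive unfolding kappaEF_def by blast
  then have "kmin \<le> kappaEF kap V F" using norm_onormal[OF simplex face] by simp
  obtain q where q: "V = insert q F" "q \<notin> F" using simplex_face_opposite_vertex[OF simplex face] .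
  obtain f0 where f0: "f0 \<in> F" using simplex_face_nonempty[OF face] by blast
  have "bounded (convex hull V)"
    using simplex unfolding simplex_vertices_def by (simp add: compact_imp_bounded finite_imp_compact_convex_hull)
  then have "dist q f0 \<le> hE V"
    unfolding hE_def using q f0 by (intro diameter_bounded_bound) (auto intro: hull_inc)
  moreover have "0 < dist q f0" using q(2) f0 by auto
  ultimately have "0 < hE V" by linarith
  moreover have "0 < kappaEF kap V F" using pos(3) \<open>kmin \<le> kappaEF kap V F\<close> by linarith
  ultimately show ?thesis unfolding tauEF_def using pos by simp
qed

lemma aH_face_test:
  fixes T :: "(real^'n) set set"
  assumes "finite T" "\<forall>V\<in>T. finite V"
  shows "aH eps alpha0 CT T kap u uh (\<lambda>_ _. 0) (\<lambda>F'. if F' = F then q else (\<lambda>_. 0)) =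
    - (\<Sum>V\<in>{V\<in>T. is_face V F}.
         face_integral F (\<lambda>y. q y * (hatsigma alpha0 CT kap u uh V F y \<bullet> onormal V F)))"
    (is "_ = - (\<Sum>V\<in>_. ?flux V)")
proof -
  let ?vh = "\<lambda>F'. if F' = F then q else (\<lambda>_. 0)"
  have volume: "(\<Sum>V\<in>T. integral (convex hull V) (\<lambda>x. (kap V *v grad (u V) x) \<bullet> grad (\<lambda>_. 0) x)) = 0"
    by (simp add: grad_zero)
  have consistency: "(\<Sum>V\<in>T. \<Sum>F'\<in>{F'. is_face V F'}.
      face_integral F' (\<lambda>x. sigma kap (\<lambda>_ _. 0) V x \<bullet> hjump u uh V F' x)) = 0"
    by (simp add: sigma_def grad_zero face_integral_def)
  have "(\<Sum>F'\<in>{F'. is_face V F'}.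
        face_integral F' (\<lambda>x. hatsigma alpha0 CT kap u uh V F' x \<bullet> hjump (\<lambda>_ _. 0) ?vh V F' x))
      = (if is_face V F then - ?flux V else 0)" if "V \<in> T" for V
  proof -
    have "finite {F. is_face V F}"
      using assms(2) that finite_subset[of "{F. is_face V F}" "Pow V"] by (auto simp: is_face_def)
    moreover have "face_integral F' (\<lambda>x. hatsigma alpha0 CT kap u uh V F' x \<bullet> hjump (\<lambda>_ _. 0) ?vh V F' x)
        = (if F' = F then - ?flux V else 0)" for F'
      by (simp add: hjump_def face_integral_def mult.commute)
    ultimately show ?thesis by (simp add: sum.delta)
  qed
  then have "(\<Sum>V\<in>T. \<Sum>F'\<in>{F'. is_face V F'}.
        face_integral F' (\<lambda>x. hatsigma alpha0 CT kap u uh V F' x \<bullet> hjump (\<lambda>_ _. 0) ?vh V F' x))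
      = (\<Sum>V\<in>T. if is_face V F then - ?flux V else 0)"
    by (rule sum.cong[OF refl])
  also have "\<dots> = (\<Sum>V\<in>{V\<in>T. is_face V F}. - ?flux V)"
    using assms(1) by (rule sum.inter_filter[symmetric])
  also have "\<dots> = - (\<Sum>V\<in>{V\<in>T. is_face V F}. ?flux V)"
    by (rule sum_negf)
  finally show ?thesis unfolding aH_def using volume consistency by simp
qed

lemma HIP_normal_flux_continuous:
  fixes T :: "(real^'n) set set"
  assumes mesh: "conforming_simplicial_mesh \<Omega> T"
    and sol: "HIP_solution k eps alpha0 CT T kap f u uh"
    and V: "V1 \<in> T" "V2 \<in> T" "V1 \<noteq> V2" and face: "is_face V1 F" "is_face V2 F"
    and x: "x \<in> convex hull F"
  shows "hatsigma alpha0 CT kap u uh V1 F x \<bullet> onormal V1 F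
       + hatsigma alpha0 CT kap u uh V2 F x \<bullet> onormal V2 F = 0"
proof -
  define flux where "flux V y = hatsigma alpha0 CT kap u uh V F y \<bullet> onormal V F" for V y
  define jump where "jump y = flux V1 y + flux V2 y" for y
  have F: "F \<in> faces_of T" using V(1) face(1) unfolding faces_of_def by blast
  have flux_Pk: "flux V \<in> Pk k" if "V \<in> T" for V
    using sol F that unfolding flux_def HIP_solution_def in_Vh_def in_Vhat_def
    by (intro normal_flux_Pk) auto
  have jump_Pk: "jump \<in> Pk k" unfolding jump_def by (intro Pk_add flux_Pk V)
  have "\<not> boundary_face T F"
    using V face F unfolding boundary_face_def interior_face_def is_face_def by blast
  then have "in_Vhat k T (\<lambda>F'. if F' = F then jump else (\<lambda>_. 0))"
    unfolding in_Vhat_def using Pk_zero jump_Pk by auto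
  moreover have "in_Vh k T (\<lambda>_ _. 0)" unfolding in_Vh_def using Pk_zero by auto
  ultimately have "aH eps alpha0 CT T kap u uh (\<lambda>_ _. 0) (\<lambda>F'. if F' = F then jump else (\<lambda>_. 0)) = 0"
    using sol unfolding HIP_solution_def by simp
  moreover have "finite T" "\<forall>V\<in>T. finite V"
    using mesh unfolding conforming_simplicial_mesh_def by auto
  ultimately have "face_integral F (\<lambda>y. jump y * flux V1 y) + face_integral F (\<lambda>y. jump y * flux V2 y) = 0"
    using aH_face_test[of T eps alpha0 CT kap u uh F jump] elements_sharing_face[OF mesh V face] V(3)
    by (simp add: flux_def)
  moreover have "face_integral F (\<lambda>y. jump y * flux V1 y + jump y * flux V2 y)
      = face_integral F (\<lambda>y. jump y * flux V1 y) + face_integral F (\<lambda>y. jump y * flux V2 y)"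
    using V jump_Pk flux_Pk
    by (intro face_integral_add simplex_face_finite[OF mesh_simplex_vertices[OF mesh V(1)] face(1)]
          continuous_intros continuous_on_Pk)
  ultimately have "face_integral F (\<lambda>y. (jump y)\<^sup>2) = 0"
    by (simp add: jump_def power2_eq_square distrib_left)
  then have "jump x = 0"
    by (rule face_integral_square_eq_0[OF mesh_simplex_vertices[OF mesh V(1)] face(1)
          continuous_on_Pk[OF jump_Pk] _ x])
  then show ?thesis by (simp add: jump_def flux_def)
qed

lemma flux_balance_solve:
  fixes K1 K2 t1 t2 u1 u2 z :: real
  assumes balance: "(- K1 + t1 * (u1 - z)) + (K2 + t2 * (u2 - z)) = 0" and nz: "t1 + t2 \<noteq> 0"
  shows "z = (t1 / (t1 + t2) * u1 + t2 / (t1 + t2) * u2) - 1 / (t1 + t2) * (K1 - K2)"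
    and "- K1 + t1 * (u1 - z)
         = - (t2 / (t1 + t2) * K1 + t1 / (t1 + t2) * K2) + t1 * t2 / (t1 + t2) * (u1 - u2)"
proof -
  have "z * (t1 + t2) = t1 * u1 + t2 * u2 - K1 + K2" using balance by (simp add: algebra_simps)
  then have z: "z = (t1 * u1 + t2 * u2 - K1 + K2) / (t1 + t2)" using nz by (simp add: eq_divide_eq)
  then show "z = (t1 / (t1 + t2) * u1 + t2 / (t1 + t2) * u2) - 1 / (t1 + t2) * (K1 - K2)"
    by (simp add: add_divide_distrib diff_divide_distrib right_diff_distrib)
  have "- K1 + t1 * (u1 - z)
      = (- K1 * (t1 + t2) + t1 * u1 * (t1 + t2) - t1 * (t1 * u1 + t2 * u2 - K1 + K2)) / (t1 + t2)"
    unfolding z using nz by (simp add: field_simps)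
  also have "\<dots> = (- (t2 * K1) - t1 * K2 + t1 * t2 * (u1 - u2)) / (t1 + t2)"
    by (simp add: algebra_simps)
  finally show "- K1 + t1 * (u1 - z)
      = - (t2 / (t1 + t2) * K1 + t1 / (t1 + t2) * K2) + t1 * t2 / (t1 + t2) * (u1 - u2)"
    by (simp add: add_divide_distrib diff_divide_distrib)
qed

lemma HIP_interior_flux_balance:
  fixes T :: "(real^'n) set set"
  assumes mesh: "conforming_simplicial_mesh \<Omega> T"
    and sol: "HIP_solution k eps alpha0 CT T kap f u uh"
    and V: "V1 \<in> T" "V2 \<in> T" "V1 \<noteq> V2" and face: "is_face V1 F" "is_face V2 F"
    and x: "x \<in> convex hull F"
  shows "(- ((kap V1 *v grad (u V1) x) \<bullet> onormal V1 F) + tauEF alpha0 CT kap V1 F * (u V1 x - uh F x))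
       + ((kap V2 *v grad (u V2) x) \<bullet> onormal V1 F + tauEF alpha0 CT kap V2 F * (u V2 x - uh F x)) = 0"
proof -
  have simplex: "simplex_vertices V1" "simplex_vertices V2"
    using mesh_simplex_vertices[OF mesh] V by auto
  have n2: "onormal V2 F = - onormal V1 F"
    by (rule onormal_adjacent[OF simplex V(3) face mesh_convex_hull_Int[OF mesh V]])
  have nn: "onormal V1 F \<bullet> onormal V1 F = 1" by (rule inner_onormal_self[OF simplex(1) face(1)])
  have flux1: "hatsigma alpha0 CT kap u uh V1 F x \<bullet> onormal V1 F
      = - ((kap V1 *v grad (u V1) x) \<bullet> onormal V1 F) + tauEF alpha0 CT kap V1 F * (u V1 x - uh F x)"
    using nn by (simp add: inner_hatsigma_onormal)
  have flux2: "hatsigma alpha0 CT kap u uh V2 F x \<bullet> onormal V2 F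
      = (kap V2 *v grad (u V2) x) \<bullet> onormal V1 F + tauEF alpha0 CT kap V2 F * (u V2 x - uh F x)"
    using inner_hatsigma_onormal[of alpha0 CT kap u uh V2 F x] nn unfolding n2 by simp
  show ?thesis using HIP_normal_flux_continuous[OF mesh sol V face x] flux1 flux2 by linarith
qed

lemma HIP_trace_interior_face:
  fixes T :: "(real^'n) set set"
  assumes mesh: "conforming_simplicial_mesh \<Omega> T"
    and sol: "HIP_solution k eps alpha0 CT T kap f u uh"
    and V: "V1 \<in> T" "V2 \<in> T" "V1 \<noteq> V2" and face: "is_face V1 F" "is_face V2 F"
    and x: "x \<in> convex hull F"
    and tau: "0 < tauEF alpha0 CT kap V1 F" "0 < tauEF alpha0 CT kap V2 F"
  defines "t1 \<equiv> tauEF alpha0 CT kap V1 F" and "t2 \<equiv> tauEF alpha0 CT kap V2 F"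
  shows "uh F x = (t1 / (t1 + t2) * u V1 x + t2 / (t1 + t2) * u V2 x)
           - 1 / (t1 + t2) * ((kap V1 *v grad (u V1) x) \<bullet> onormal V1 F
                              + (kap V2 *v grad (u V2) x) \<bullet> onormal V2 F)"
proof -
  have "onormal V2 F = - onormal V1 F"
    using V face by (intro onormal_adjacent mesh_simplex_vertices[OF mesh] mesh_convex_hull_Int[OF mesh])
  moreover have "t1 + t2 \<noteq> 0" using tau unfolding t1_def t2_def by simp
  ultimately show ?thesis
    using flux_balance_solve(1)[OF HIP_interior_flux_balance[OF mesh sol V face x]]
    unfolding t1_def t2_def by simp
qed

lemma HIP_flux_interior_face:
  fixes T :: "(real^'n) set set"
  assumes mesh: "conforming_simplicial_mesh \<Omega> T"
    and sol: "HIP_solution k eps alpha0 CT T kap f u uh"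
    and V: "V1 \<in> T" "V2 \<in> T" "V1 \<noteq> V2" and face: "is_face V1 F" "is_face V2 F"
    and x: "x \<in> convex hull F"
    and tau: "0 < tauEF alpha0 CT kap V1 F" "0 < tauEF alpha0 CT kap V2 F"
  defines "t1 \<equiv> tauEF alpha0 CT kap V1 F" and "t2 \<equiv> tauEF alpha0 CT kap V2 F"
    and "n1 \<equiv> onormal V1 F" and "n2 \<equiv> onormal V2 F"
  shows "hatsigma alpha0 CT kap u uh V1 F x \<bullet> n1 =
    (- ((t2 / (t1 + t2)) *\<^sub>R (kap V1 *v grad (u V1) x) + (t1 / (t1 + t2)) *\<^sub>R (kap V2 *v grad (u V2) x))
     + (t1 * t2 / (t1 + t2)) *\<^sub>R (u V1 x *\<^sub>R n1 + u V2 x *\<^sub>R n2)) \<bullet> n1"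
proof -
  have simplex: "simplex_vertices V1" using mesh_simplex_vertices[OF mesh V(1)] .
  have "n2 = - n1"
    unfolding n1_def n2_def using V face
    by (intro onormal_adjacent mesh_simplex_vertices[OF mesh] mesh_convex_hull_Int[OF mesh])
  moreover have nn: "n1 \<bullet> n1 = 1" unfolding n1_def by (rule inner_onormal_self[OF simplex face(1)])
  ultimately have "(- ((t2 / (t1 + t2)) *\<^sub>R (kap V1 *v grad (u V1) x)
        + (t1 / (t1 + t2)) *\<^sub>R (kap V2 *v grad (u V2) x))
      + (t1 * t2 / (t1 + t2)) *\<^sub>R (u V1 x *\<^sub>R n1 + u V2 x *\<^sub>R n2)) \<bullet> n1
    = - (t2 / (t1 + t2) * ((kap V1 *v grad (u V1) x) \<bullet> n1)
        + t1 / (t1 + t2) * ((kap V2 *v grad (u V2) x) \<bullet> n1))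
      + t1 * t2 / (t1 + t2) * (u V1 x - u V2 x)"
    by (simp add: inner_add_left algebra_simps diff_divide_distrib)
  moreover have "hatsigma alpha0 CT kap u uh V1 F x \<bullet> n1
      = - ((kap V1 *v grad (u V1) x) \<bullet> n1) + t1 * (u V1 x - uh F x)"
    using nn unfolding n1_def t1_def by (simp add: inner_hatsigma_onormal)
  moreover have "t1 + t2 \<noteq> 0" using tau unfolding t1_def t2_def by simp
  ultimately show ?thesis
    using flux_balance_solve(2)[OF HIP_interior_flux_balance[OF mesh sol V face x]]
    unfolding t1_def t2_def n1_def by simp
qed

theorem mainTheorem2:
  fixes \<Omega> :: "(real^'n) set"
    and T :: "(real^'n) set set"
    and kap :: "(real^'n) set \<Rightarrow> real^'n^'n"
    and kmin kmax CT alpha0 eps :: real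
    and k :: nat
    and f :: "real^'n \<Rightarrow> real"
    and u uh :: "(real^'n) set \<Rightarrow> real^'n \<Rightarrow> real"
  assumes dim: "CARD('n) = 2 \<or> CARD('n) = 3"
    and dom: "lipschitz_domain \<Omega>"
    and mesh: "conforming_simplicial_mesh \<Omega> T"
    and h_le: "\<forall>V\<in>T. hE V \<le> 1"
    and kap_sym: "\<forall>V\<in>T. transpose (kap V) = kap V"
    and kap_bnd: "0 < kmin" "kmin \<le> kmax"
      "\<forall>V\<in>T. \<forall>\<xi>. kmin * (norm \<xi>)\<^sup>2 \<le> \<xi> \<bullet> (kap V *v \<xi>) \<and> \<xi> \<bullet> (kap V *v \<xi>) \<le> kmax * (norm \<xi>)\<^sup>2"
    and k: "1 \<le> k"
    and CT: "0 < CT"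
      "\<forall>V\<in>T. \<forall>F. is_face V F \<longrightarrow> (\<forall>w\<in>Pk k.
          face_integral F (\<lambda>x. (w x)\<^sup>2) \<le> CT\<^sup>2 / hE V * integral (convex hull V) (\<lambda>x. (w x)\<^sup>2))"
    and alpha0: "0 < alpha0"
    and eps: "eps \<in> {-1, 0, 1}"
    and f: "f \<in> borel_measurable lebesgue" "set_integrable lebesgue \<Omega> (\<lambda>x. (f x)\<^sup>2)"
    and sol: "HIP_solution k eps alpha0 CT T kap f u uh"
  shows
    "(\<forall>V1\<in>T. \<forall>V2\<in>T. \<forall>F. V1 \<noteq> V2 \<and> is_face V1 F \<and> is_face V2 F \<longrightarrow>
       (let t1 = tauEF alpha0 CT kap V1 F; t2 = tauEF alpha0 CT kap V2 F;
            n1 = onormal V1 F; n2 = onormal V2 F;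
            w1 = t1 / (t1 + t2); w2 = t2 / (t1 + t2);
            rho0 = t1 * t2 / (t1 + t2); rho1 = 1 / (t1 + t2) in
        \<forall>x\<in>convex hull F.
          \<comment> \<open>(a)\<close>
          uh F x = (w1 * u V1 x + w2 * u V2 x)
                   - rho1 * ((kap V1 *v grad (u V1) x) \<bullet> n1 + (kap V2 *v grad (u V2) x) \<bullet> n2)
          \<comment> \<open>(b)\<close>
        \<and> hatsigma alpha0 CT kap u uh V1 F x \<bullet> n1 + hatsigma alpha0 CT kap u uh V2 F x \<bullet> n2 = 0
          \<comment> \<open>(c), interior faces\<close>
        \<and> hatsigma alpha0 CT kap u uh V1 F x \<bullet> n1 =
            (- (w2 *\<^sub>R (kap V1 *v grad (u V1) x) + w1 *\<^sub>R (kap V2 *v grad (u V2) x))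
             + rho0 *\<^sub>R (u V1 x *\<^sub>R n1 + u V2 x *\<^sub>R n2)) \<bullet> n1))
   \<and> (\<forall>F. boundary_face T F \<longrightarrow>
       (\<forall>x\<in>convex hull F. uh F x = 0) \<and>
       (\<forall>V\<in>T. is_face V F \<longrightarrow> (\<forall>x\<in>convex hull F.
          hatsigma alpha0 CT kap u uh V F x \<bullet> onormal V F =
            (- (kap V *v grad (u V) x)
             + tauEF alpha0 CT kap V F *\<^sub>R (u V x *\<^sub>R onormal V F)) \<bullet> onormal V F)))"
proof -
  have tau_pos: "0 < tauEF alpha0 CT kap V F" if "V \<in> T" "is_face V F" for V F
    using tauEF_pos[OF mesh_simplex_vertices[OF mesh that(1)] that(2) alpha0 CT(1) kap_bnd(1)]
      kap_bnd(3) that(1) by blast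
  have zero_trace: "uh F x = 0" if "boundary_face T F" "x \<in> convex hull F" for F x
    using sol that unfolding HIP_solution_def in_Vhat_def by blast
  show ?thesis
    apply (unfold Let_def, intro conjI ballI allI impI; (elim conjE)?)
    subgoal by (rule HIP_trace_interior_face[OF mesh sol]) (auto intro: tau_pos)
    subgoal by (rule HIP_normal_flux_continuous[OF mesh sol])
    subgoal by (rule HIP_flux_interior_face[OF mesh sol]) (auto intro: tau_pos)
    subgoal by (rule zero_trace)
    subgoal by (simp add: zero_trace hatsigma_def sigma_def hjump_def)
    done
qed

end
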